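(* Fix $c \in \mathbb{R}$. For any $\vartheta \in \mathbb{R}$ and any $\alpha \in (0, 0.5)$ there exists $\delta > 0$ such that whenever $c < x^{\text{obs}} < c + \delta$, we have $\vartheta \notin [\theta(1-\alpha/2), \theta(\alpha/2)]$, where $\theta(\cdot)$ is computed at this $x^{\text{obs}}$.
   Context: Let $\Phi$ denote the standard normal distribution function. For $c \in \mathbb{R}$, $a \ge c$ and $\theta \in \mathbb{R}$ define $$F(a;\theta,c) = \frac{\Phi(a-\theta) - \Phi(c-\theta)}{1-\Phi(c-\theta)}.$$ It is known that for each fixed $x^{\text{obs}} > c$ the map $\theta \mapsto F(x^{\text{obs}};\theta,c)$ is continuous and strictly decreasing from $\mathbb{R}$ onto $(0,1)$. For $p \in (0,1)$ and $x^{\text{obs}} > c$, $\theta(p) = \theta(p; x^{\text{obs}}, c)$ denotes the unique $\theta$ with $F(x^{\text{obs}};\theta,c) = p$; it is strictly decreasing in $p$. The interval $[\theta(1-\alpha/2), \theta(\alpha/2)]$ is the $100(1-\alpha)\%$ conditional confidence interval. *)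

theory Defs
  imports "HOL-Probability.Probability"
begin

definition Phi :: "real \<Rightarrow> real" where
  "Phi = cdf (density lborel std_normal_density)"

definition Ftrunc :: "real \<Rightarrow> real \<Rightarrow> real \<Rightarrow> real" where
  "Ftrunc a \<theta> c = (Phi (a - \<theta>) - Phi (c - \<theta>)) / (1 - Phi (c - \<theta>))"

definition theta_p :: "real \<Rightarrow> real \<Rightarrow> real \<Rightarrow> real" where
  "theta_p p xobs c = (THE \<theta>. Ftrunc xobs \<theta> c = p)"

end

theory Submission imports Defs "HOL-Real_Asymp.Real_Asymp" begin

text \<open>For \<open>x > c\<close> write \<open>F(x; \<theta>, c) = 1 - R\<^sub>d(c - \<theta>)\<close> with \<open>d = x - c\<close> and the tail ratio
  \<open>R\<^sub>d(u) = (1 - \<Phi>(u + d)) / (1 - \<Phi>(u))\<close>. The Mills ratio inequality \<open>u (1 - \<Phi>(u)) < \<phi>(u)\<close> makes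
  the normal hazard rate \<open>\<phi> / (1 - \<Phi>)\<close> increasing and larger than the identity, hence \<open>R\<^sub>d\<close> is
  strictly decreasing with \<open>R\<^sub>d(u) < exp (- d u)\<close>. So \<open>F(x; \<cdot>, c)\<close> is a strictly decreasing
  continuous bijection onto \<open>(0,1)\<close>, and \<open>\<theta>(p) < \<vartheta>\<close> iff \<open>F(x; \<vartheta>, c) < p\<close>. Since
  \<open>F(x; \<vartheta>, c) \<rightarrow> 0\<close> as \<open>x \<rightarrow> c\<close>, eventually \<open>F(x; \<vartheta>, c) < \<alpha>/2\<close>, i.e. \<open>\<theta>(\<alpha>/2) < \<vartheta>\<close>.\<close>

abbreviation phi :: "real \<Rightarrow> real" where
  "phi \<equiv> std_normal_density"

lemma real_distribution_std_normal: "real_distribution (density lborel std_normal_density)"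
  unfolding real_distribution_def real_distribution_axioms_def
  by (simp add: prob_space_normal_density)

lemma Phi_diff_eq_integral:
  assumes "a < x"
  shows "Phi x - Phi a = (LBINT t=a..x. phi t)"
proof -
  let ?M = "density lborel std_normal_density"
  have "Phi x - Phi a = measure ?M {a<..x}"
    unfolding Phi_def
    using finite_borel_measure.cdf_diff_eq[OF
        real_distribution.finite_borel_measure_M[OF real_distribution_std_normal] assms] .
  also have "\<dots> = integral\<^sup>L ?M (indicator {a<..x})"
    by simp
  also have "\<dots> = integral\<^sup>L lborel (\<lambda>t. phi t *\<^sub>R indicator {a<..x} t)"
    by (rule integral_density) auto
  also have "\<dots> = (LBINT t=a..x. phi t)"
    using assms by (simp add: interval_integral_Ioc set_lebesgue_integral_def mult.commute)
  finally show ?thesis .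
qed

lemma Phi_has_real_derivative: "(Phi has_real_derivative phi x) (at x)"
proof -
  let ?G = "\<lambda>u. Phi (x - 1) + (LBINT t=x-1..u. phi t)"
  have "continuous_on {x-1..x+1} phi"
    unfolding std_normal_density_def by (intro continuous_intros) auto
  from interval_integral_FTC2[of "x-1" "x-1" "x+1" phi x, OF _ _ this]
  have "(?G has_vector_derivative phi x) (at x within {x-1..x+1})"
    by (auto intro!: derivative_eq_intros)
  then have "(?G has_real_derivative phi x) (at x)"
    by (simp add: has_real_derivative_iff_has_vector_derivative at_within_Icc_at)
  then show ?thesis
  proof (rule has_field_derivative_transform_within_open[where S="{x-1<..}"])
    show "\<And>u. u \<in> {x-1<..} \<Longrightarrow> ?G u = Phi u"
      using Phi_diff_eq_integral by force
  qed auto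
qed

lemma Phi_has_real_derivative_comp [derivative_intros]:
  "(g has_real_derivative g') (at x within S) \<Longrightarrow>
   ((\<lambda>x. Phi (g x)) has_real_derivative phi (g x) * g') (at x within S)"
  by (rule DERIV_chain2[OF Phi_has_real_derivative])

lemma std_normal_density_has_real_derivative: "(phi has_real_derivative - u * phi u) (at u)"
proof -
  have "((\<lambda>u. exp (- u\<^sup>2 / 2)) has_real_derivative exp (- u\<^sup>2 / 2) * - u) (at u)"
    by (auto intro!: derivative_eq_intros)
  from DERIV_cmult[OF this, of "1 / sqrt (2 * pi)"] show ?thesis
    unfolding std_normal_density_def[abs_def] by (simp add: mult_ac)
qed

lemma std_normal_density_pos: "0 < phi u"
  by (simp add: normal_density_pos)

lemma isCont_Phi [continuous_intros]: "isCont g x \<Longrightarrow> isCont (\<lambda>x. Phi (g x)) x"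
  using isCont_o2 DERIV_isCont[OF Phi_has_real_derivative] by blast

lemma Phi_le_1: "Phi u \<le> 1"
  unfolding Phi_def using real_distribution.cdf_bounded_prob[OF real_distribution_std_normal] .

lemma tendsto_Phi_at_top: "(Phi \<longlongrightarrow> 1) at_top"
  unfolding Phi_def using real_distribution.cdf_lim_at_top_prob[OF real_distribution_std_normal] .

lemma tendsto_Phi_at_bot: "(Phi \<longlongrightarrow> 0) at_bot"
  unfolding Phi_def using finite_borel_measure.cdf_lim_at_bot[OF
      real_distribution.finite_borel_measure_M[OF real_distribution_std_normal]] .

lemma Phi_strict_mono: "a < b \<Longrightarrow> Phi a < Phi b"
  using DERIV_pos_imp_increasing[of a b Phi] Phi_has_real_derivative std_normal_density_pos
  by blast

lemma Phi_tail_pos: "0 < 1 - Phi u"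
  using Phi_strict_mono[of u "u + 1"] Phi_le_1[of "u + 1"] by simp

lemma Mills_ratio_less: "u * (1 - Phi u) < phi u"
proof (cases "0 < u")
  case True
  define m where "m v = phi v / v - (1 - Phi v)" for v
  have m_decreasing: "m b < m a" if "0 < a" "a < b" for a b
  proof (rule DERIV_neg_imp_decreasing[OF \<open>a < b\<close>])
    fix v assume "a \<le> v" "v \<le> b"
    with that have "(m has_real_derivative - phi v / v\<^sup>2) (at v)"
      unfolding m_def
      by (auto intro!: derivative_eq_intros std_normal_density_has_real_derivative
          simp: field_simps power2_eq_square)
    then show "\<exists>y. (m has_real_derivative y) (at v) \<and> y < 0"
      using std_normal_density_pos[of v] \<open>a \<le> v\<close> that by (auto intro!: exI)
  qed
  have "((\<lambda>v. phi v / v) \<longlongrightarrow> 0) at_top"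
    unfolding std_normal_density_def by real_asymp
  then have "(m \<longlongrightarrow> 0 - (1 - 1)) at_top"
    unfolding m_def by (intro tendsto_intros tendsto_Phi_at_top)
  then have "0 \<le> m (u + 1)"
  proof (intro tendsto_le[OF _ tendsto_const, of _ m], simp_all)
    show "\<forall>\<^sub>F v in at_top. m v \<le> m (u + 1)"
      using eventually_ge_at_top[of "u + 2"]
      by eventually_elim (use m_decreasing[of "u + 1"] True in \<open>auto intro: less_imp_le\<close>)
  qed
  with m_decreasing[of u "u + 1"] True have "0 < m u" by simp
  then show ?thesis using True unfolding m_def by (simp add: field_simps)
next
  case False
  then have "u * (1 - Phi u) \<le> 0"
    using Phi_tail_pos[of u] by (simp add: mult_nonpos_nonneg)
  then show ?thesis using std_normal_density_pos[of u] by linarith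
qed

lemma normal_hazard_gt: "u < phi u / (1 - Phi u)"
  using Mills_ratio_less[of u] Phi_tail_pos[of u] by (simp add: field_simps)

lemma normal_hazard_strict_mono:
  assumes "a < b"
  shows "phi a / (1 - Phi a) < phi b / (1 - Phi b)"
proof (rule DERIV_pos_imp_increasing[OF assms])
  fix v
  let ?d = "(- v * phi v * (1 - Phi v) - phi v * - phi v) / (1 - Phi v)\<^sup>2"
  have "((\<lambda>v. phi v / (1 - Phi v)) has_real_derivative ?d) (at v)"
    using Phi_tail_pos[of v]
    by (auto intro!: derivative_eq_intros std_normal_density_has_real_derivative
        simp: power2_eq_square)
  moreover have "0 < phi v * (phi v - v * (1 - Phi v))"
    using std_normal_density_pos[of v] Mills_ratio_less[of v] by simp
  then have "0 < ?d"
    using Phi_tail_pos[of v] by (simp add: algebra_simps)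
  ultimately show "\<exists>y. ((\<lambda>v. phi v / (1 - Phi v)) has_real_derivative y) (at v) \<and> 0 < y"
    by blast
qed

lemma tail_ratio_strict_antimono:
  assumes "0 < d" "a < b"
  shows "(1 - Phi (b + d)) / (1 - Phi b) < (1 - Phi (a + d)) / (1 - Phi a)"
proof (rule DERIV_neg_imp_decreasing[OF assms(2)])
  fix v
  let ?d = "(- phi (v + d) * (1 - Phi v) - (1 - Phi (v + d)) * - phi v) / (1 - Phi v)\<^sup>2"
  have "((\<lambda>v. (1 - Phi (v + d)) / (1 - Phi v)) has_real_derivative ?d) (at v)"
    using Phi_tail_pos[of v] by (auto intro!: derivative_eq_intros simp: power2_eq_square)
  moreover have "phi v / (1 - Phi v) < phi (v + d) / (1 - Phi (v + d))"
    using normal_hazard_strict_mono assms by simp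
  then have "(1 - Phi (v + d)) * phi v < phi (v + d) * (1 - Phi v)"
    using Phi_tail_pos[of v] Phi_tail_pos[of "v + d"] by (simp add: field_simps)
  then have "?d < 0"
    using Phi_tail_pos[of v] by (simp add: divide_neg_pos algebra_simps)
  ultimately show "\<exists>y. ((\<lambda>v. (1 - Phi (v + d)) / (1 - Phi v)) has_real_derivative y) (at v) \<and> y < 0"
    by blast
qed

lemma tail_ratio_less_exp:
  assumes "0 < d" "0 \<le> u"
  shows "(1 - Phi (u + d)) / (1 - Phi u) < exp (- d * u)"
proof -
  have "((\<lambda>v. ln (1 - Phi v)) has_real_derivative - phi v / (1 - Phi v)) (at v)" for v
    using Phi_tail_pos[of v] by (auto intro!: derivative_eq_intros)
  from MVT2[of u "u + d", OF _ this] assms obtain z where z: "u < z" "z < u + d"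
    "ln (1 - Phi (u + d)) - ln (1 - Phi u) = d * - (phi z / (1 - Phi z))"
    by auto
  have "d * u < d * (phi z / (1 - Phi z))"
    using normal_hazard_gt[of z] z assms by (intro mult_strict_left_mono) auto
  with z have "ln ((1 - Phi (u + d)) / (1 - Phi u)) < - d * u"
    using Phi_tail_pos[of u] Phi_tail_pos[of "u + d"] by (simp add: ln_div)
  then have "exp (ln ((1 - Phi (u + d)) / (1 - Phi u))) < exp (- d * u)"
    by simp
  then show ?thesis
    using Phi_tail_pos[of u] Phi_tail_pos[of "u + d"] by simp
qed

lemma tendsto_tail_ratio_at_top:
  assumes "0 < d"
  shows "((\<lambda>u. (1 - Phi (u + d)) / (1 - Phi u)) \<longlongrightarrow> 0) at_top"
proof (rule tendsto_sandwich)
  show "\<forall>\<^sub>F u in at_top. 0 \<le> (1 - Phi (u + d)) / (1 - Phi u)"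
    by (intro always_eventually allI divide_nonneg_pos less_imp_le Phi_tail_pos)
  show "\<forall>\<^sub>F u in at_top. (1 - Phi (u + d)) / (1 - Phi u) \<le> exp (- d * u)"
    using eventually_ge_at_top[of 0]
    by eventually_elim (rule less_imp_le[OF tail_ratio_less_exp[OF assms]])
  show "((\<lambda>u. exp (- d * u)) \<longlongrightarrow> 0) at_top"
    using assms by real_asymp
qed simp

lemma Ftrunc_eq_tail_ratio: "Ftrunc x \<theta> c = 1 - (1 - Phi ((c - \<theta>) + (x - c))) / (1 - Phi (c - \<theta>))"
  unfolding Ftrunc_def using Phi_tail_pos[of "c - \<theta>"] by (simp add: field_simps)

lemma Ftrunc_strict_antimono: "c < x \<Longrightarrow> \<theta>1 < \<theta>2 \<Longrightarrow> Ftrunc x \<theta>2 c < Ftrunc x \<theta>1 c"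
  using tail_ratio_strict_antimono[of "x - c" "c - \<theta>2" "c - \<theta>1"] unfolding Ftrunc_eq_tail_ratio
  by simp

lemma Ftrunc_less_iff: "c < x \<Longrightarrow> Ftrunc x \<theta>2 c < Ftrunc x \<theta>1 c \<longleftrightarrow> \<theta>1 < \<theta>2"
  by (metis Ftrunc_strict_antimono less_asym linorder_neqE_linordered_idom)

lemma isCont_Ftrunc_param: "isCont (\<lambda>\<theta>. Ftrunc x \<theta> c) \<theta>"
  unfolding Ftrunc_def using Phi_tail_pos[of "c - \<theta>"] by (intro continuous_intros) auto

lemma tendsto_Ftrunc_at_bot:
  assumes "c < x"
  shows "((\<lambda>\<theta>. Ftrunc x \<theta> c) \<longlongrightarrow> 1) at_bot"
proof -
  have "filterlim (\<lambda>\<theta>. c - \<theta>) at_top at_bot"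
    using filterlim_tendsto_add_at_top[OF tendsto_const filterlim_uminus_at_top_at_bot, of c]
    by simp
  from filterlim_compose[OF tendsto_tail_ratio_at_top[of "x - c"] this] assms
  have "((\<lambda>\<theta>. (1 - Phi ((c - \<theta>) + (x - c))) / (1 - Phi (c - \<theta>))) \<longlongrightarrow> 0) at_bot"
    by simp
  from tendsto_diff[OF tendsto_const this, of 1] show ?thesis
    unfolding Ftrunc_eq_tail_ratio by simp
qed

lemma tendsto_Ftrunc_at_top: "((\<lambda>\<theta>. Ftrunc x \<theta> c) \<longlongrightarrow> 0) at_top"
proof -
  have "filterlim (\<lambda>\<theta>. a - \<theta>) at_bot at_top" for a :: real
    using filterlim_tendsto_add_at_top[OF tendsto_const filterlim_ident, of "- a"]
    by (simp add: filterlim_uminus_at_bot)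
  then have Phi_shift: "((\<lambda>\<theta>. Phi (a - \<theta>)) \<longlongrightarrow> 0) at_top" for a
    by (rule filterlim_compose[OF tendsto_Phi_at_bot])
  have "((\<lambda>\<theta>. Ftrunc x \<theta> c) \<longlongrightarrow> (0 - 0) / (1 - 0)) at_top"
    unfolding Ftrunc_def by (intro tendsto_intros Phi_shift) simp
  then show ?thesis by simp
qed

lemma Ftrunc_theta_p:
  assumes "c < x" "0 < p" "p < 1"
  shows "Ftrunc x (theta_p p x c) c = p"
proof -
  obtain a where a: "p < Ftrunc x a c"
    using order_tendstoD(1)[OF tendsto_Ftrunc_at_bot[OF \<open>c < x\<close>] \<open>p < 1\<close>]
    by (auto simp: eventually_at_bot_linorder)
  obtain b where b: "Ftrunc x b c < p"
    using order_tendstoD(2)[OF tendsto_Ftrunc_at_top[of x c] \<open>0 < p\<close>]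
    by (auto simp: eventually_at_top_linorder)
  have "a < b"
    using Ftrunc_less_iff[OF \<open>c < x\<close>, of b a] a b by simp
  with IVT2[of "\<lambda>\<theta>. Ftrunc x \<theta> c" b p a] a b isCont_Ftrunc_param
  obtain t where t: "Ftrunc x t c = p" by fastforce
  have "theta_p p x c = t"
    unfolding theta_p_def
  proof (rule the_equality)
    show "Ftrunc x t c = p" by (fact t)
    show "s = t" if "Ftrunc x s c = p" for s
      using that t Ftrunc_strict_antimono[OF \<open>c < x\<close>, of s t] Ftrunc_strict_antimono[OF \<open>c < x\<close>, of t s]
      by (cases s t rule: linorder_cases) auto
  qed
  with t show ?thesis by simp
qed

lemma theta_p_less_iff:
  assumes "c < x" "0 < p" "p < 1"
  shows "theta_p p x c < \<theta> \<longleftrightarrow> Ftrunc x \<theta> c < p"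
  using Ftrunc_less_iff[OF \<open>c < x\<close>, of \<theta> "theta_p p x c"] Ftrunc_theta_p[OF assms] by simp

lemma tendsto_Ftrunc_at_cutoff: "((\<lambda>x. Ftrunc x \<theta> c) \<longlongrightarrow> 0) (at_right c)"
proof -
  have "isCont (\<lambda>x. Ftrunc x \<theta> c) c"
    unfolding Ftrunc_def using Phi_tail_pos[of "c - \<theta>"] by (intro continuous_intros) auto
  then have "((\<lambda>x. Ftrunc x \<theta> c) \<longlongrightarrow> 0) (at c)"
    by (simp add: isCont_def Ftrunc_def)
  then show ?thesis
    by (rule tendsto_mono[OF at_le[OF subset_UNIV]])
qed

theorem mainTheorem2:
  fixes c \<theta>0 \<alpha> :: real
  assumes "0 < \<alpha>" and "\<alpha> < 1/2"
  shows "\<exists>\<delta>>0. \<forall>xobs. c < xobs \<and> xobs < c + \<delta> \<longrightarrow>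
           \<theta>0 \<notin> {theta_p (1 - \<alpha>/2) xobs c .. theta_p (\<alpha>/2) xobs c}"
proof -
  have "\<forall>\<^sub>F x in at_right c. Ftrunc x \<theta>0 c < \<alpha>/2"
    using order_tendstoD(2)[OF tendsto_Ftrunc_at_cutoff[of \<theta>0 c], of "\<alpha>/2"] \<open>0 < \<alpha>\<close> by simp
  then obtain b where "c < b" and small: "\<And>x. c < x \<Longrightarrow> x < b \<Longrightarrow> Ftrunc x \<theta>0 c < \<alpha>/2"
    unfolding eventually_at_right_field by blast
  show ?thesis
  proof (intro exI[of _ "b - c"] conjI allI impI)
    fix x assume "c < x \<and> x < c + (b - c)"
    then have "theta_p (\<alpha>/2) x c < \<theta>0"
      using theta_p_less_iff[of c x] small assms by simp
    then show "\<theta>0 \<notin> {theta_p (1 - \<alpha>/2) x c .. theta_p (\<alpha>/2) x c}"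
      by simp
  qed (use \<open>c < b\<close> in simp)
qed

end
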